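(* Let $n\ge 1$, $r\ge 0$, and let $J\subseteq\Delta^r_n$ be a nonempty subset. Then $J$ is M-convex if and only if its characteristic function $\chi_J\colon\Delta^r_n\to\mathbb K$ satisfies the Plücker relations \[ \sum_{k=0}^s \chi_J\big(\alpha+\epsilon_{i_0}+\dots+\widehat{\epsilon_{i_k}}+\dots+\epsilon_{i_s}\big)\cdot\chi_J\big(\alpha+\epsilon_{i_k}+\epsilon_{j_2}+\dots+\epsilon_{j_s}\big)\ \in\ N_{\mathbb K} \] for every $s\in\{2,\dots,r\}$, every $\alpha\in\Delta^{r-s}_n$ with $\delta^-_J\le\alpha$, and all $i_0,\dots,i_s,j_2,\dots,j_s\in[n]$ such that $\alpha+\epsilon_{i_0}+\dots+\epsilon_{i_s}+\epsilon_{j_2}+\dots+\epsilon_{j_s}\le\delta^+_J$. (Here the hat means the term is omitted.)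
   Context: $\Delta^r_n=\{\alpha\in\mathbb N^n:\alpha_1+\dots+\alpha_n=r\}$; $\epsilon_i$ is the $i$-th standard basis vector; $\le$ is the componentwise partial order on $\mathbb Z^n$. A nonempty $J\subseteq\Delta^r_n$ is M-convex if for all $\alpha,\beta\in J$ and every $i\in[n]$ with $\alpha_i<\beta_i$ there is $j\in[n]$ with $\alpha_j>\beta_j$ such that both $\alpha+\epsilon_i-\epsilon_j$ and $\beta-\epsilon_i+\epsilon_j$ lie in $J$. For finite $J$, $\delta^-_J=\inf J$ and $\delta^+_J=\sup J$ are the vectors with $\delta^-_{J,i}=\min\{\alpha_i:\alpha\in J\}$ and $\delta^+_{J,i}=\max\{\alpha_i:\alpha\in J\}$. The Krasner hyperfield is $\mathbb K=\{0,1\}$; a formal sum of elements of $\mathbb K$ lies in its null set $N_{\mathbb K}$ if and only if the number of summands equal to $1$ is not exactly one. $\chi_J(\alpha)=1$ if $\alpha\in J$ and $0$ otherwise. *)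

theory Defs
  imports Main
begin

text \<open>Vectors in N^n are functions nat => nat, indexed by [n] = {0..<n},
  vanishing outside [n].\<close>

definition Delta :: "nat \<Rightarrow> nat \<Rightarrow> (nat \<Rightarrow> nat) set" where
  "Delta r n = {\<alpha>. (\<forall>i\<ge>n. \<alpha> i = 0) \<and> (\<Sum>i<n. \<alpha> i) = r}"

definition eps :: "nat \<Rightarrow> nat \<Rightarrow> nat" where
  "eps i = (\<lambda>k. if k = i then 1 else 0)"

definition M_convex :: "nat \<Rightarrow> (nat \<Rightarrow> nat) set \<Rightarrow> bool" where
  "M_convex n J \<longleftrightarrow> J \<noteq> {} \<and>
     (\<forall>\<alpha>\<in>J. \<forall>\<beta>\<in>J. \<forall>i<n. \<alpha> i < \<beta> i \<longrightarrow>
        (\<exists>j<n. \<alpha> j > \<beta> j \<and>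
           (\<lambda>k. \<alpha> k + eps i k - eps j k) \<in> J \<and>
           (\<lambda>k. \<beta> k - eps i k + eps j k) \<in> J))"

definition delta_minus :: "(nat \<Rightarrow> nat) set \<Rightarrow> nat \<Rightarrow> nat" where
  "delta_minus J = (\<lambda>k. Min ((\<lambda>\<alpha>. \<alpha> k) ` J))"

definition delta_plus :: "(nat \<Rightarrow> nat) set \<Rightarrow> nat \<Rightarrow> nat" where
  "delta_plus J = (\<lambda>k. Max ((\<lambda>\<alpha>. \<alpha> k) ` J))"

text \<open>Krasner hyperfield K = {0,1}, modelled inside nat; multiplication of K agrees
  with multiplication of nat on {0,1}.\<close>

definition krasner_null :: "nat list \<Rightarrow> bool" where
  "krasner_null xs \<longleftrightarrow> length (filter (\<lambda>x. x = 1) xs) \<noteq> 1"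

definition chi :: "(nat \<Rightarrow> nat) set \<Rightarrow> (nat \<Rightarrow> nat) \<Rightarrow> nat" where
  "chi J \<alpha> = (if \<alpha> \<in> J then 1 else 0)"

text \<open>Pluecker relations: i gives i_0..i_s, j gives j_2..j_s.\<close>

definition pluecker :: "nat \<Rightarrow> nat \<Rightarrow> (nat \<Rightarrow> nat) set \<Rightarrow> bool" where
  "pluecker n r J \<longleftrightarrow>
    (\<forall>s \<in> {2..r}. \<forall>\<alpha> \<in> Delta (r - s) n. \<forall>i j :: nat \<Rightarrow> nat.
      (\<forall>k<n. delta_minus J k \<le> \<alpha> k) \<longrightarrow>
      (\<forall>l\<in>{0..s}. i l < n) \<longrightarrow> (\<forall>l\<in>{2..s}. j l < n) \<longrightarrow>
      (\<forall>t<n. \<alpha> t + (\<Sum>l\<in>{0..s}. eps (i l) t) + (\<Sum>l\<in>{2..s}. eps (j l) t)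
               \<le> delta_plus J t) \<longrightarrow>
      krasner_null (map (\<lambda>k.
          chi J (\<lambda>t. \<alpha> t + (\<Sum>l\<in>{0..s} - {k}. eps (i l) t)) *
          chi J (\<lambda>t. \<alpha> t + eps (i k) t + (\<Sum>l\<in>{2..s}. eps (j l) t)))
        [0..<s+1]))"

end

theory Submission
  imports Defs
begin

text \<open>If exactly one term of a Pluecker relation of an M-convex set were 1, say the k-th, then
  either another index repeats i_k and gives an equal term, or the left vector of that term is
  smaller than the right one at i_k; the exchange axiom there yields a coordinate i_m, m \<noteq> k,
  whose term is 1 as well. Conversely, for a, b \<in> J with a_i < b_i write
  a = min(a,b) + e_i1 + ... + e_is and b = min(a,b) + e_i + e_j2 + ... + e_js. With i_0 = i and
  \<alpha> = min(a,b), the 0-th term of the corresponding relation is \<chi>(a)\<chi>(b) = 1, so another term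
  k \<noteq> 0 is 1, and that term is precisely the exchange of a and b along i and j = i_k. For s = 1
  there is no relation, but then the exchange is (b, a) itself.\<close>

lemma finite_Delta: "finite (Delta r n)"
proof (rule finite_subset)
  show "Delta r n \<subseteq> {f. \<forall>t. (t \<in> {..<n} \<longrightarrow> f t \<in> {..r}) \<and> (t \<notin> {..<n} \<longrightarrow> f t = 0)}"
  proof (intro subsetI CollectI allI conjI impI)
    fix f t assume f: "f \<in> Delta r n"
    show "f t = 0" if "t \<notin> {..<n}" using f that by (simp add: Delta_def)
    show "f t \<in> {..r}" if "t \<in> {..<n}"
    proof -
      have "f t \<le> (\<Sum>t<n. f t)" using that by (intro member_le_sum) auto
      with f show ?thesis by (simp add: Delta_def)
    qed
  qed
qed (rule finite_set_of_finite_funs; simp)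

lemma chi_mult_chi_eq_1_iff: "chi J \<alpha> * chi J \<beta> = 1 \<longleftrightarrow> \<alpha> \<in> J \<and> \<beta> \<in> J"
  by (simp add: chi_def)

lemma krasner_null_map_upt_iff:
  "krasner_null (map F [0..<N]) \<longleftrightarrow> (\<forall>k<N. F k = 1 \<longrightarrow> (\<exists>m<N. m \<noteq> k \<and> F m = 1))"
proof -
  have "krasner_null (map F [0..<N]) \<longleftrightarrow> card {k. k < N \<and> F k = 1} \<noteq> 1"
    by (simp add: krasner_null_def length_filter_conv_card cong: conj_cong)
  also have "\<dots> \<longleftrightarrow> (\<forall>k<N. F k = 1 \<longrightarrow> (\<exists>m<N. m \<noteq> k \<and> F m = 1))"
    unfolding One_nat_def card_1_singleton_iff by blast
  finally show ?thesis .
qed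

lemma sum_eps_eq_0_iff: "finite L \<Longrightarrow> (\<Sum>l\<in>L. eps (I l) t) = 0 \<longleftrightarrow> (\<forall>l\<in>L. I l \<noteq> t)"
  by (auto simp: eps_def)

lemma sum_eps_lessThan: "t0 < n \<Longrightarrow> (\<Sum>t<n. eps t0 t) = 1"
  by (simp add: eps_def)

lemma M_convex_pluecker_term_exchange:
  fixes \<alpha> \<beta> I :: "nat \<Rightarrow> nat" and L :: "nat set"
  defines "A \<equiv> \<lambda>k t. \<alpha> t + (\<Sum>l\<in>L - {k}. eps (I l) t)"
    and "B \<equiv> \<lambda>k t. \<alpha> t + eps (I k) t + \<beta> t"
  assumes J: "M_convex n J" and L: "finite L" "\<forall>l\<in>L. I l < n"
    and k: "k \<in> L" "A k \<in> J" "B k \<in> J"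
  shows "\<exists>m\<in>L. m \<noteq> k \<and> A m \<in> J \<and> B m \<in> J"
proof (cases "\<exists>m\<in>L. m \<noteq> k \<and> I m = I k")
  case True
  then obtain m where m: "m \<in> L" "m \<noteq> k" "I m = I k" by blast
  have "A m = A k"
  proof
    fix t
    show "A m t = A k t"
      using sum.remove[OF L(1) m(1), of "\<lambda>l. eps (I l) t"] sum.remove[OF L(1) k(1), of "\<lambda>l. eps (I l) t"] m(3)
      by (simp add: A_def)
  qed
  moreover have "B m = B k" using m(3) by (simp add: B_def)
  ultimately show ?thesis using m k by auto
next
  case False
  let ?x = "I k"
  have "(\<Sum>l\<in>L - {k}. eps (I l) ?x) = 0"
    using False L(1) by (subst sum_eps_eq_0_iff) auto
  then have "A k ?x < B k ?x" by (simp add: A_def B_def eps_def)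
  then obtain j where j: "j < n" "B k j < A k j"
      "(\<lambda>t. A k t + eps ?x t - eps j t) \<in> J" "(\<lambda>t. B k t - eps ?x t + eps j t) \<in> J"
    using J k L(2) unfolding M_convex_def by blast
  then have "(\<Sum>l\<in>L - {k}. eps (I l) j) \<noteq> 0" by (simp add: A_def B_def)
  then obtain m where m: "m \<in> L" "m \<noteq> k" "I m = j"
    using L(1) by (subst (asm) sum_eps_eq_0_iff) auto
  have "A m = (\<lambda>t. A k t + eps ?x t - eps j t)"
  proof
    fix t
    show "A m t = A k t + eps ?x t - eps j t"
      using sum.remove[OF L(1) m(1), of "\<lambda>l. eps (I l) t"] sum.remove[OF L(1) k(1), of "\<lambda>l. eps (I l) t"] m(3)
      by (simp add: A_def)
  qed
  moreover have "B m = (\<lambda>t. B k t - eps ?x t + eps j t)"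
    using m(3) by (simp add: B_def fun_eq_iff)
  ultimately show ?thesis using m j by auto
qed

lemma M_convex_imp_pluecker: "M_convex n J \<Longrightarrow> pluecker n r J"
  unfolding pluecker_def krasner_null_map_upt_iff chi_mult_chi_eq_1_iff
proof (intro ballI allI impI)
  fix s k :: nat and \<alpha> I K :: "nat \<Rightarrow> nat"
  assume "M_convex n J" "\<forall>l\<in>{0..s}. I l < n" "k < s + 1"
    "(\<lambda>t. \<alpha> t + (\<Sum>l\<in>{0..s} - {k}. eps (I l) t)) \<in> J \<and>
     (\<lambda>t. \<alpha> t + eps (I k) t + (\<Sum>l\<in>{2..s}. eps (K l) t)) \<in> J"
  then show "\<exists>m<s + 1. m \<noteq> k \<and>
     (\<lambda>t. \<alpha> t + (\<Sum>l\<in>{0..s} - {m}. eps (I l) t)) \<in> J \<and>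
     (\<lambda>t. \<alpha> t + eps (I m) t + (\<Sum>l\<in>{2..s}. eps (K l) t)) \<in> J"
    using M_convex_pluecker_term_exchange[of n J "{0..s}" I k \<alpha> "\<lambda>t. \<Sum>l\<in>{2..s}. eps (K l) t"]
    by (auto simp: less_Suc_eq_le)
qed

lemma Delta_sum_eps_representation:
  "f \<in> Delta m n \<Longrightarrow>
    \<exists>g. (\<forall>l\<in>{c..<c+m}. g l < n) \<and> (\<forall>t. (\<Sum>l\<in>{c..<c+m}. eps (g l) t) = f t)"
proof (induction m arbitrary: f)
  case 0
  then have "f t = 0" for t by (cases "t < n") (auto simp: Delta_def)
  then show ?case by simp
next
  case (Suc m)
  have "\<exists>t0<n. f t0 > 0"
  proof (rule ccontr)
    assume "\<not> ?thesis"
    then have "(\<Sum>t<n. f t) = 0" by simp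
    with Suc.prems show False by (simp add: Delta_def)
  qed
  then obtain t0 where t0: "t0 < n" "f t0 > 0" by blast
  define f' where "f' = f(t0 := f t0 - 1)"
  have f_eq: "f t = f' t + eps t0 t" for t
    using t0 by (simp add: f'_def eps_def)
  have "(\<Sum>t<n. f' t) + 1 = Suc m"
    using Suc.prems t0(1) by (simp add: Delta_def f_eq sum.distrib sum_eps_lessThan)
  moreover have "\<forall>t\<ge>n. f' t = 0" using Suc.prems t0(1) by (auto simp: Delta_def f'_def)
  ultimately obtain g' where g': "\<forall>l\<in>{c..<c+m}. g' l < n"
      "\<forall>t. (\<Sum>l\<in>{c..<c+m}. eps (g' l) t) = f' t"
    using Suc.IH[of f'] by (auto simp: Delta_def)
  define g where "g = g'(c + m := t0)"
  have "(\<Sum>l\<in>{c..<c+Suc m}. eps (g l) t) = f t" for t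
  proof -
    have "(\<Sum>l\<in>{c..<c+Suc m}. eps (g l) t) = (\<Sum>l\<in>{c..<c+m}. eps (g' l) t) + eps t0 t"
      by (simp add: g_def)
    then show ?thesis using g'(2) f_eq by simp
  qed
  moreover have "\<forall>l\<in>{c..<c+Suc m}. g l < n" using g'(1) t0(1) by (simp add: g_def)
  ultimately show ?case by blast
qed

lemma Delta_exchange_decomposition:
  assumes a: "a \<in> Delta r n" and b: "b \<in> Delta r n" and i: "i < n" "a i < b i"
  obtains s I K where "1 \<le> s" "s \<le> r" "I 0 = i" "\<forall>l\<in>{0..s}. I l < n" "\<forall>l\<in>{2..s}. K l < n"
    "(\<lambda>t. min (a t) (b t)) \<in> Delta (r - s) n"
    "\<And>t. a t = min (a t) (b t) + (\<Sum>l\<in>{1..s}. eps (I l) t)"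
    "\<And>t. b t = min (a t) (b t) + eps i t + (\<Sum>l\<in>{2..s}. eps (K l) t)"
proof -
  define g where "g t = min (a t) (b t)" for t
  define P where "P t = a t - b t" for t
  define Q where "Q t = b t - a t - eps i t" for t
  define s where "s = (\<Sum>t<n. P t)"
  have a_eq: "a t = g t + P t" for t by (simp add: g_def P_def)
  have b_eq: "b t = g t + eps i t + Q t" for t
    using i(2) by (cases "t = i") (simp_all add: g_def Q_def eps_def)
  have outside: "a t = 0 \<and> b t = 0 \<and> eps i t = 0" if "t \<ge> n" for t
    using a b i(1) that by (auto simp: Delta_def eps_def)
  have sum_a: "(\<Sum>t<n. g t) + s = r"
    using a by (simp add: Delta_def a_eq sum.distrib s_def)
  have sum_b: "(\<Sum>t<n. g t) + 1 + (\<Sum>t<n. Q t) = r"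
    using b i(1) by (simp add: Delta_def b_eq sum.distrib sum_eps_lessThan)
  have s: "1 \<le> s" "s \<le> r" using sum_a sum_b by linarith+
  have P: "P \<in> Delta s n" using outside by (simp add: Delta_def s_def P_def)
  have Q: "Q \<in> Delta (s - 1) n"
    using outside sum_a sum_b by (simp add: Delta_def Q_def)
  obtain I where I: "\<forall>l\<in>{1..<1+s}. I l < n" "\<forall>t. (\<Sum>l\<in>{1..<1+s}. eps (I l) t) = P t"
    using Delta_sum_eps_representation[OF P] by blast
  obtain K where K: "\<forall>l\<in>{2..<2+(s-1)}. K l < n" "\<forall>t. (\<Sum>l\<in>{2..<2+(s-1)}. eps (K l) t) = Q t"
    using Delta_sum_eps_representation[OF Q] by blast
  have intervals: "{1..<1+s} = {1..s}" "{2..<2+(s-1)} = {2..s}" using s(1) by auto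
  have sum_I: "(\<Sum>l\<in>{1..s}. eps ((I(0 := i)) l) t) = P t" for t
  proof -
    have "(\<Sum>l\<in>{1..s}. eps ((I(0 := i)) l) t) = (\<Sum>l\<in>{1..s}. eps (I l) t)"
      by (rule sum.cong) auto
    with I(2) show ?thesis unfolding intervals by simp
  qed
  show thesis
  proof (rule that[of s "I(0 := i)" K])
    show "\<forall>l\<in>{0..s}. (I(0 := i)) l < n" using I(1) i(1) unfolding intervals by auto
    show "\<forall>l\<in>{2..s}. K l < n" using K(1) unfolding intervals .
    show "(\<lambda>t. min (a t) (b t)) \<in> Delta (r - s) n"
      using outside sum_a by (simp add: Delta_def g_def)
    show "a t = min (a t) (b t) + (\<Sum>l\<in>{1..s}. eps ((I(0 := i)) l) t)" for t
      using a_eq[of t] unfolding sum_I g_def .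
    show "b t = min (a t) (b t) + eps i t + (\<Sum>l\<in>{2..s}. eps (K l) t)" for t
      using b_eq[of t] K(2) unfolding intervals g_def by metis
  qed (use s in simp_all)
qed

lemma pluecker_relation_between:
  fixes \<alpha> I K :: "nat \<Rightarrow> nat"
  assumes "finite J" "pluecker n r J" "a \<in> J" "b \<in> J" "s \<in> {2..r}" "\<alpha> \<in> Delta (r - s) n"
    "\<forall>l\<in>{0..s}. I l < n" "\<forall>l\<in>{2..s}. K l < n"
    and above_min: "\<And>t. min (a t) (b t) \<le> \<alpha> t"
    and below_max: "\<And>t. \<alpha> t + (\<Sum>l\<in>{0..s}. eps (I l) t) + (\<Sum>l\<in>{2..s}. eps (K l) t) \<le> max (a t) (b t)"
  shows "krasner_null (map (\<lambda>k.
      chi J (\<lambda>t. \<alpha> t + (\<Sum>l\<in>{0..s} - {k}. eps (I l) t)) *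
      chi J (\<lambda>t. \<alpha> t + eps (I k) t + (\<Sum>l\<in>{2..s}. eps (K l) t))) [0..<s+1])"
proof -
  have "delta_minus J t \<le> \<alpha> t" for t
  proof -
    have "delta_minus J t \<le> min (a t) (b t)" using assms(1,3,4) by (simp add: delta_minus_def)
    also have "\<dots> \<le> \<alpha> t" by (rule above_min)
    finally show ?thesis .
  qed
  moreover have "\<alpha> t + (\<Sum>l\<in>{0..s}. eps (I l) t) + (\<Sum>l\<in>{2..s}. eps (K l) t) \<le> delta_plus J t" for t
  proof -
    have "max (a t) (b t) \<le> delta_plus J t" using assms(1,3,4) by (simp add: delta_plus_def)
    with below_max[of t] show ?thesis by (rule le_trans)
  qed
  ultimately show ?thesis using assms(2,5-8) unfolding pluecker_def by blast
qed

lemma pluecker_terms_eq_exchange: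
  fixes g I K a b :: "nat \<Rightarrow> nat"
  assumes a: "\<And>t. a t = g t + (\<Sum>l\<in>{1..s}. eps (I l) t)"
    and b: "\<And>t. b t = g t + eps (I 0) t + (\<Sum>l\<in>{2..s}. eps (K l) t)"
  shows "k \<le> s \<Longrightarrow>
      (\<lambda>t. g t + (\<Sum>l\<in>{0..s} - {k}. eps (I l) t)) = (\<lambda>t. a t + eps (I 0) t - eps (I k) t)"
    and "(\<lambda>t. g t + eps (I k) t + (\<Sum>l\<in>{2..s}. eps (K l) t)) = (\<lambda>t. b t - eps (I 0) t + eps (I k) t)"
    and "g t + (\<Sum>l\<in>{0..s}. eps (I l) t) + (\<Sum>l\<in>{2..s}. eps (K l) t) + g t = a t + b t"
proof -
  have sum_0: "(\<Sum>l\<in>{0..s}. eps (I l) t) = eps (I 0) t + (\<Sum>l\<in>{1..s}. eps (I l) t)" for t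
  proof -
    have "{0..s} = insert 0 {1..s}" by auto
    then show ?thesis by simp
  qed
  show "(\<lambda>t. g t + (\<Sum>l\<in>{0..s} - {k}. eps (I l) t)) = (\<lambda>t. a t + eps (I 0) t - eps (I k) t)"
    if "k \<le> s"
  proof
    fix t
    have "(\<Sum>l\<in>{0..s}. eps (I l) t) = eps (I k) t + (\<Sum>l\<in>{0..s} - {k}. eps (I l) t)"
      using that by (simp add: sum.remove)
    then show "g t + (\<Sum>l\<in>{0..s} - {k}. eps (I l) t) = a t + eps (I 0) t - eps (I k) t"
      using sum_0[of t] a[of t] by linarith
  qed
  show "(\<lambda>t. g t + eps (I k) t + (\<Sum>l\<in>{2..s}. eps (K l) t)) = (\<lambda>t. b t - eps (I 0) t + eps (I k) t)"
    using b by (simp add: fun_eq_iff)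
  show "g t + (\<Sum>l\<in>{0..s}. eps (I l) t) + (\<Sum>l\<in>{2..s}. eps (K l) t) + g t = a t + b t"
    using sum_0[of t] a[of t] b[of t] by linarith
qed

lemma pluecker_imp_exchange:
  assumes J: "finite J" "J \<subseteq> Delta r n" and pl: "pluecker n r J"
    and ab: "a \<in> J" "b \<in> J" and i: "i < n" "a i < b i"
  shows "\<exists>j<n. b j < a j \<and> (\<lambda>k. a k + eps i k - eps j k) \<in> J \<and> (\<lambda>k. b k - eps i k + eps j k) \<in> J"
proof -
  define g where "g t = min (a t) (b t)" for t
  obtain s I K where s: "1 \<le> s" "s \<le> r" and I: "I 0 = i" "\<forall>l\<in>{0..s}. I l < n"
    and K: "\<forall>l\<in>{2..s}. K l < n" and g: "g \<in> Delta (r - s) n"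
    and a_eq: "\<And>t. a t = g t + (\<Sum>l\<in>{1..s}. eps (I l) t)"
    and b_eq: "\<And>t. b t = g t + eps i t + (\<Sum>l\<in>{2..s}. eps (K l) t)"
    using Delta_exchange_decomposition[of a r n b i] ab J(2) i unfolding g_def[abs_def] by blast
  define A where "A k = (\<lambda>t. g t + (\<Sum>l\<in>{0..s} - {k}. eps (I l) t))" for k
  define B where "B k = (\<lambda>t. g t + eps (I k) t + (\<Sum>l\<in>{2..s}. eps (K l) t))" for k
  have A_eq: "A k = (\<lambda>t. a t + eps i t - eps (I k) t)"
    and B_eq: "B k = (\<lambda>t. b t - eps i t + eps (I k) t)" if "k \<le> s" for k
    using pluecker_terms_eq_exchange(1,2)[where g = g and I = I and K = K and s = s and k = k] a_eq b_eq that
    unfolding A_def B_def I(1) by simp_all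
  have "\<exists>k\<in>{1..s}. A k \<in> J \<and> B k \<in> J"
  proof (cases "s = 1")
    case True
    then have "A 1 = b" "B 1 = a" using A_eq[of 1] B_eq[of 1] a_eq b_eq by (simp_all add: fun_eq_iff)
    then show ?thesis using ab True by auto
  next
    case False
    have A0: "A 0 = a" and B0: "B 0 = b"
      using A_eq[of 0] B_eq[of 0] b_eq by (simp_all add: I(1) fun_eq_iff)
    moreover have "krasner_null (map (\<lambda>k. chi J (A k) * chi J (B k)) [0..<s+1])"
      unfolding A_def B_def
    proof (rule pluecker_relation_between[OF J(1) pl ab _ g I(2) K])
      show "s \<in> {2..r}" using s False by simp
      show "min (a t) (b t) \<le> g t" for t by (simp add: g_def)
      show "g t + (\<Sum>l\<in>{0..s}. eps (I l) t) + (\<Sum>l\<in>{2..s}. eps (K l) t) \<le> max (a t) (b t)" for t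
      proof -
        have "g t + (\<Sum>l\<in>{0..s}. eps (I l) t) + (\<Sum>l\<in>{2..s}. eps (K l) t) + g t = a t + b t"
          using pluecker_terms_eq_exchange(3)[where g = g and I = I and K = K and s = s and t = t] a_eq b_eq
          unfolding I(1) by blast
        then show ?thesis by (auto simp: g_def min_def max_def)
      qed
    qed
    ultimately have "\<exists>k<s + 1. k \<noteq> 0 \<and> A k \<in> J \<and> B k \<in> J"
      using ab unfolding krasner_null_map_upt_iff chi_mult_chi_eq_1_iff by (metis zero_less_Suc Suc_eq_plus1)
    then show ?thesis by auto
  qed
  then obtain k where k: "k \<in> {1..s}" "A k \<in> J" "B k \<in> J" by blast
  have "(\<Sum>l\<in>{1..s}. eps (I l) (I k)) \<noteq> 0" using k(1) by (subst sum_eps_eq_0_iff) auto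
  then have "g (I k) < a (I k)" using a_eq[of "I k"] by linarith
  then have "b (I k) < a (I k)" by (simp add: g_def)
  then show ?thesis using k A_eq B_eq I(2) by auto
qed

theorem theoremA:
  fixes n r :: nat and J :: "(nat \<Rightarrow> nat) set"
  assumes "n \<ge> 1" and "J \<subseteq> Delta r n" and "J \<noteq> {}"
  shows "M_convex n J \<longleftrightarrow> pluecker n r J"
proof
  show "pluecker n r J" if "M_convex n J" using that by (rule M_convex_imp_pluecker)
next
  assume pl: "pluecker n r J"
  have "finite J" using assms(2) finite_Delta by (rule finite_subset)
  with assms(2,3) pl show "M_convex n J"
    unfolding M_convex_def by (blast intro: pluecker_imp_exchange)
qed

end
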